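(* Let $X$ be a set, $B=(B,+,0)$ a unitary magma and $(A,k,q,s,p)$ a retraction point from $X$ to $B$. Suppose that $k(x)+s(b+b')=(k(x)+s(b))+s(b')$ for all $x\in X$ and $b,b'\in B$. Then every retraction point of the form $(B,k',q',s',p')$ (from any set $Y$ to any unitary magma $C$) is composable with $(A,k,q,s,p)$.
   Context: A unitary magma is a set with a binary operation $+$ and an element $0$ with $b+0=b=0+b$ for all $b$; morphisms preserve $+$ and $0$. Given a set $X$ and a unitary magma $B$, a retraction point from $X$ to $B$ is a tuple $(A,k,q,s,p)$ where $A=(A,+,0)$ is a unitary magma, $k\colon X\to A$ and $q\colon A\to X$ are maps, $s\colon B\to A$ and $p\colon A\to B$ are morphisms of unitary magmas, and $p(s(b))=b$, $q(k(x))=x$, $p(k(x))=0$, $q(s(b))=q(0)$, and $k(q(a))+s(p(a))=a$ for all $x\in X$, $b\in B$, $a\in A$. Composability: let $(A,k,q,s,p)$ be a retraction point from $X$ to $B$ and $(B,k',q',s',p')$ a retraction point from a set $Y$ to a unitary magma $C$. Let $A\times_B Y=\{(a,y)\in A\times Y\mid p(a)=k'(y)\}$ with first projection $\pi_1\colon A\times_B Y\to A$, and define $q''\colon A\to A\times_B Y$ by $q''(a)=\big(k(q(a))+s(k'(q'(p(a)))),\ q'(p(a))\big)$. The retraction point $(B,k',q',s',p')$ is said to be composable with $(A,k,q,s,p)$ if $(A,\pi_1,q'',s s',p'p)$ is a retraction point from the set $A\times_B Y$ to $C$. *)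

theory Defs
  imports Main "HOL-Library.FuncSet"
begin

definition unitary_magma :: "'a set \<Rightarrow> ('a \<Rightarrow> 'a \<Rightarrow> 'a) \<Rightarrow> 'a \<Rightarrow> bool" where
  "unitary_magma M pl z \<longleftrightarrow>
     z \<in> M \<and> (\<forall>a\<in>M. \<forall>b\<in>M. pl a b \<in> M) \<and> (\<forall>b\<in>M. pl b z = b \<and> pl z b = b)"

definition magma_hom ::
  "'a set \<Rightarrow> ('a \<Rightarrow> 'a \<Rightarrow> 'a) \<Rightarrow> 'a \<Rightarrow> 'b set \<Rightarrow> ('b \<Rightarrow> 'b \<Rightarrow> 'b) \<Rightarrow> 'b \<Rightarrow> ('a \<Rightarrow> 'b) \<Rightarrow> bool" where
  "magma_hom M plM zM N plN zN f \<longleftrightarrow>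
     f \<in> M \<rightarrow> N \<and> (\<forall>a\<in>M. \<forall>b\<in>M. f (plM a b) = plN (f a) (f b)) \<and> f zM = zN"

definition retraction_point ::
  "'x set \<Rightarrow> 'b set \<Rightarrow> ('b \<Rightarrow> 'b \<Rightarrow> 'b) \<Rightarrow> 'b \<Rightarrow>
   'a set \<Rightarrow> ('a \<Rightarrow> 'a \<Rightarrow> 'a) \<Rightarrow> 'a \<Rightarrow>
   ('x \<Rightarrow> 'a) \<Rightarrow> ('a \<Rightarrow> 'x) \<Rightarrow> ('b \<Rightarrow> 'a) \<Rightarrow> ('a \<Rightarrow> 'b) \<Rightarrow> bool" where
  "retraction_point X B plB zB A plA zA k q s p \<longleftrightarrow>
     unitary_magma B plB zB \<and> unitary_magma A plA zA \<and>
     k \<in> X \<rightarrow> A \<and> q \<in> A \<rightarrow> X \<and>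
     magma_hom B plB zB A plA zA s \<and> magma_hom A plA zA B plB zB p \<and>
     (\<forall>b\<in>B. p (s b) = b) \<and> (\<forall>x\<in>X. q (k x) = x) \<and> (\<forall>x\<in>X. p (k x) = zB) \<and>
     (\<forall>b\<in>B. q (s b) = q zA) \<and> (\<forall>a\<in>A. plA (k (q a)) (s (p a)) = a)"

definition fib_prod :: "'a set \<Rightarrow> ('a \<Rightarrow> 'b) \<Rightarrow> 'y set \<Rightarrow> ('y \<Rightarrow> 'b) \<Rightarrow> ('a \<times> 'y) set" where
  "fib_prod A p Y k' = {(a, y). a \<in> A \<and> y \<in> Y \<and> p a = k' y}"

definition composable ::
  "'x set \<Rightarrow> 'b set \<Rightarrow> ('b \<Rightarrow> 'b \<Rightarrow> 'b) \<Rightarrow> 'b \<Rightarrow>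
   'a set \<Rightarrow> ('a \<Rightarrow> 'a \<Rightarrow> 'a) \<Rightarrow> 'a \<Rightarrow>
   ('x \<Rightarrow> 'a) \<Rightarrow> ('a \<Rightarrow> 'x) \<Rightarrow> ('b \<Rightarrow> 'a) \<Rightarrow> ('a \<Rightarrow> 'b) \<Rightarrow>
   'y set \<Rightarrow> 'c set \<Rightarrow> ('c \<Rightarrow> 'c \<Rightarrow> 'c) \<Rightarrow> 'c \<Rightarrow>
   ('y \<Rightarrow> 'b) \<Rightarrow> ('b \<Rightarrow> 'y) \<Rightarrow> ('c \<Rightarrow> 'b) \<Rightarrow> ('b \<Rightarrow> 'c) \<Rightarrow> bool" where
  "composable X B plB zB A plA zA k q s p Y C plC zC k' q' s' p' \<longleftrightarrow>
     retraction_point (fib_prod A p Y k') C plC zC A plA zA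
       fst
       (\<lambda>a. (plA (k (q a)) (s (k' (q' (p a)))), q' (p a)))
       (s \<circ> s') (p' \<circ> p)"

end

theory Submission
  imports Defs
begin

text \<open>
  The associativity hypothesis is needed exactly once, to rebuild a as
  (k (q a) + s (k' (q' (p a)))) + s (s' (p' (p a))) = k (q a) + s (k' (q' (p a)) + s' (p' (p a)))
  = k (q a) + s (p a), where the inner sum is the decomposition of p a in B.
\<close>

lemma magma_hom_comp:
  assumes "magma_hom M plM zM N plN zN f" and "magma_hom N plN zN P plP zP g"
  shows "magma_hom M plM zM P plP zP (g \<circ> f)"
  using assms unfolding magma_hom_def Pi_def by auto

locale retraction_pt =
  fixes X :: "'x set" and B :: "'b set" and plB :: "'b \<Rightarrow> 'b \<Rightarrow> 'b" and zB :: 'b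
    and A :: "'a set" and plA :: "'a \<Rightarrow> 'a \<Rightarrow> 'a" and zA :: 'a
    and k :: "'x \<Rightarrow> 'a" and q :: "'a \<Rightarrow> 'x" and s :: "'b \<Rightarrow> 'a" and p :: "'a \<Rightarrow> 'b"
  assumes retraction_point: "retraction_point X B plB zB A plA zA k q s p"
begin

lemma
  shows magma_A: "unitary_magma A plA zA" and magma_B: "unitary_magma B plB zB"
    and hom_s: "magma_hom B plB zB A plA zA s" and hom_p: "magma_hom A plA zA B plB zB p"
    and k_closed: "x \<in> X \<Longrightarrow> k x \<in> A" and q_closed: "a \<in> A \<Longrightarrow> q a \<in> X"
    and s_closed: "b \<in> B \<Longrightarrow> s b \<in> A" and p_closed: "a \<in> A \<Longrightarrow> p a \<in> B"
    and p_plus: "a \<in> A \<Longrightarrow> a' \<in> A \<Longrightarrow> p (plA a a') = plB (p a) (p a')"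
    and s_zero: "s zB = zA" and p_zero: "p zA = zB"
    and p_s: "b \<in> B \<Longrightarrow> p (s b) = b" and q_k: "x \<in> X \<Longrightarrow> q (k x) = x"
    and p_k: "x \<in> X \<Longrightarrow> p (k x) = zB" and q_s: "b \<in> B \<Longrightarrow> q (s b) = q zA"
    and decompose: "a \<in> A \<Longrightarrow> plA (k (q a)) (s (p a)) = a"
    and plA_closed: "a \<in> A \<Longrightarrow> a' \<in> A \<Longrightarrow> plA a a' \<in> A"
    and plB_zero_left: "b \<in> B \<Longrightarrow> plB zB b = b"
  using retraction_point unfolding retraction_point_def magma_hom_def unitary_magma_def by auto

end

definition composite_retraction ::
  "('a \<Rightarrow> 'a \<Rightarrow> 'a) \<Rightarrow> ('x \<Rightarrow> 'a) \<Rightarrow> ('a \<Rightarrow> 'x) \<Rightarrow> ('b \<Rightarrow> 'a) \<Rightarrow> ('a \<Rightarrow> 'b) \<Rightarrow>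
   ('y \<Rightarrow> 'b) \<Rightarrow> ('b \<Rightarrow> 'y) \<Rightarrow> 'a \<Rightarrow> 'a \<times> 'y" where
  "composite_retraction plA k q s p k' q' a = (plA (k (q a)) (s (k' (q' (p a)))), q' (p a))"

lemma composable_iff_retraction_point:
  "composable X B plB zB A plA zA k q s p Y C plC zC k' q' s' p' \<longleftrightarrow>
   retraction_point (fib_prod A p Y k') C plC zC A plA zA
     fst (composite_retraction plA k q s p k' q') (s \<circ> s') (p' \<circ> p)"
  unfolding composable_def composite_retraction_def by (simp add: comp_def)

locale retraction_pt_pair =
  AB: retraction_pt X B plB zB A plA zA k q s p +
  BC: retraction_pt Y C plC zC B plB zB k' q' s' p'
  for X :: "'x set" and B :: "'b set" and plB :: "'b \<Rightarrow> 'b \<Rightarrow> 'b" and zB :: 'b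
    and A :: "'a set" and plA :: "'a \<Rightarrow> 'a \<Rightarrow> 'a" and zA :: 'a
    and k :: "'x \<Rightarrow> 'a" and q :: "'a \<Rightarrow> 'x" and s :: "'b \<Rightarrow> 'a" and p :: "'a \<Rightarrow> 'b"
    and Y :: "'y set" and C :: "'c set" and plC :: "'c \<Rightarrow> 'c \<Rightarrow> 'c" and zC :: 'c
    and k' :: "'y \<Rightarrow> 'b" and q' :: "'b \<Rightarrow> 'y" and s' :: "'c \<Rightarrow> 'b" and p' :: "'b \<Rightarrow> 'c"
begin

abbreviation q'' :: "'a \<Rightarrow> 'a \<times> 'y" where
  "q'' \<equiv> composite_retraction plA k q s p k' q'"

lemma composite_retraction_in_fib_prod:
  assumes a: "a \<in> A"
  shows "q'' a \<in> fib_prod A p Y k'"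
proof -
  let ?b = "k' (q' (p a))"
  have y: "q' (p a) \<in> Y" and b: "?b \<in> B"
    using a by (simp_all add: AB.p_closed BC.q_closed BC.k_closed)
  have kq: "k (q a) \<in> A"
    using a by (simp add: AB.q_closed AB.k_closed)
  have "p (plA (k (q a)) (s ?b)) = plB (p (k (q a))) (p (s ?b))"
    using kq b by (simp add: AB.p_plus AB.s_closed)
  also have "\<dots> = ?b"
    using a b by (simp add: AB.q_closed AB.p_k AB.p_s AB.plB_zero_left)
  finally show ?thesis
    unfolding composite_retraction_def fib_prod_def
    using kq y b by (simp add: AB.s_closed AB.plA_closed)
qed

lemma composite_retraction_fst:
  assumes "z \<in> fib_prod A p Y k'"
  shows "q'' (fst z) = z"
proof -
  obtain a y where z: "z = (a, y)" and a: "a \<in> A" and y: "y \<in> Y" and fibre: "p a = k' y"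
    using assms unfolding fib_prod_def by auto
  have "q' (p a) = y"
    using fibre y by (simp add: BC.q_k)
  moreover have "plA (k (q a)) (s (k' y)) = a"
    using a fibre AB.decompose by metis
  ultimately show ?thesis
    unfolding z composite_retraction_def by simp
qed

lemma composite_retraction_decompose:
  assumes assoc: "\<forall>x\<in>X. \<forall>b\<in>B. \<forall>b'\<in>B. plA (k x) (s (plB b b')) = plA (plA (k x) (s b)) (s b')"
    and a: "a \<in> A"
  shows "plA (fst (q'' a)) ((s \<circ> s') ((p' \<circ> p) a)) = a"
proof -
  have pa: "p a \<in> B" and qa: "q a \<in> X"
    using a by (simp_all add: AB.p_closed AB.q_closed)
  have "plA (plA (k (q a)) (s (k' (q' (p a))))) (s (s' (p' (p a))))
      = plA (k (q a)) (s (plB (k' (q' (p a))) (s' (p' (p a)))))"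
    using assoc qa pa by (simp add: BC.q_closed BC.k_closed BC.p_closed BC.s_closed)
  also have "\<dots> = plA (k (q a)) (s (p a))"
    using pa by (simp add: BC.decompose)
  also have "\<dots> = a"
    using a by (rule AB.decompose)
  finally show ?thesis
    unfolding composite_retraction_def by simp
qed

lemma composable_if_assoc:
  assumes "\<forall>x\<in>X. \<forall>b\<in>B. \<forall>b'\<in>B. plA (k x) (s (plB b b')) = plA (plA (k x) (s b)) (s b')"
  shows "composable X B plB zB A plA zA k q s p Y C plC zC k' q' s' p'"
  unfolding composable_iff_retraction_point retraction_point_def
proof (intro conjI ballI)
  show "unitary_magma C plC zC" and "unitary_magma A plA zA"
    by (fact BC.magma_B AB.magma_A)+
  show "fst \<in> fib_prod A p Y k' \<rightarrow> A"
    unfolding fib_prod_def by auto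
  show "q'' \<in> A \<rightarrow> fib_prod A p Y k'"
    using composite_retraction_in_fib_prod by blast
  show "magma_hom C plC zC A plA zA (s \<circ> s')"
    using BC.hom_s AB.hom_s by (rule magma_hom_comp)
  show "magma_hom A plA zA C plC zC (p' \<circ> p)"
    using AB.hom_p BC.hom_p by (rule magma_hom_comp)
  fix c assume "c \<in> C"
  then show "(p' \<circ> p) ((s \<circ> s') c) = c" and "q'' ((s \<circ> s') c) = q'' zA"
    by (simp_all add: composite_retraction_def BC.s_closed AB.p_s BC.p_s AB.q_s BC.q_s
        AB.p_zero AB.s_zero BC.s_zero)
next
  fix z assume z: "z \<in> fib_prod A p Y k'"
  then show "q'' (fst z) = z"
    by (rule composite_retraction_fst)
  show "(p' \<circ> p) (fst z) = zC"
    using z unfolding fib_prod_def by (auto simp: BC.p_k)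
next
  fix a assume "a \<in> A"
  with assms show "plA (fst (q'' a)) ((s \<circ> s') ((p' \<circ> p) a)) = a"
    by (rule composite_retraction_decompose)
qed

end

theorem proposition2p2:
  fixes X :: "'x set" and B :: "'b set" and A :: "'a set"
    and plB :: "'b \<Rightarrow> 'b \<Rightarrow> 'b" and plA :: "'a \<Rightarrow> 'a \<Rightarrow> 'a"
  assumes "unitary_magma B plB zB"
    and "retraction_point X B plB zB A plA zA k q s p"
    and "\<forall>x\<in>X. \<forall>b\<in>B. \<forall>b'\<in>B. plA (k x) (s (plB b b')) = plA (plA (k x) (s b)) (s b')"
  shows "\<forall>(Y :: 'y set) (C :: 'c set) plC zC k' q' s' p'.
           retraction_point Y C plC zC B plB zB k' q' s' p' \<longrightarrow>
           composable X B plB zB A plA zA k q s p Y C plC zC k' q' s' p'"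
proof (intro allI impI)
  fix Y :: "'y set" and C :: "'c set" and plC zC k' q' s' p'
  assume "retraction_point Y C plC zC B plB zB k' q' s' p'"
  then interpret retraction_pt_pair X B plB zB A plA zA k q s p Y C plC zC k' q' s' p'
    using assms(2) by (simp add: retraction_pt_pair_def retraction_pt_def)
  show "composable X B plB zB A plA zA k q s p Y C plC zC k' q' s' p'"
    using assms(3) by (rule composable_if_assoc)
qed

end
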